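(* Let $\underline c<\overline c$ and $\underline s<\overline s$ be real numbers and write $\phi(c,s)=\sqrt{c^2+s^2}$. Suppose $$\phi(\overline c,\overline s)+\phi(\underline c,\underline s)-\phi(\overline c,\underline s)-\phi(\underline c,\overline s)>0.$$ Define $\eta^3=\frac{\phi(\overline c,\overline s)-\phi(\underline c,\overline s)}{\overline c-\underline c}$, $\delta^3=\frac{\phi(\underline c,\overline s)-\phi(\underline c,\underline s)}{\overline s-\underline s}$, $\nu^3=\phi(\underline c,\underline s)-\eta^3\underline c-\delta^3\underline s$, and $\eta^4=\frac{\phi(\overline c,\underline s)-\phi(\underline c,\underline s)}{\overline c-\underline c}$, $\delta^4=\frac{\phi(\overline c,\overline s)-\phi(\overline c,\underline s)}{\overline s-\underline s}$, $\nu^4=\phi(\overline c,\overline s)-\eta^4\overline c-\delta^4\overline s$. Then for $n=3,4$ and all $(c,s)\in[\underline c,\overline c]\times[\underline s,\overline s]$ we have $\nu^n+\eta^n c+\delta^n s\ge \sqrt{c^2+s^2}$. *)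

theory Defs
  imports Complex_Main
begin

definition phi :: "real \<Rightarrow> real \<Rightarrow> real" where
  "phi c s = sqrt (c\<^sup>2 + s\<^sup>2)"

end

theory Submission
  imports Defs
begin

text \<open>Write a point of the rectangle as \<open>(c, s) = (cl + a (cu - cl), sl + b (su - sl))\<close> with
  \<open>a, b \<in> [0,1]\<close>. It is then the convex combination of the four corners with the bilinear weights
  \<open>(1-a)(1-b), a(1-b), (1-a)b, ab\<close>, so by convexity of the Euclidean norm \<open>\<phi>(c,s)\<close> is at most
  the bilinear interpolant of the corner values. Both planes agree with that interpolant up to a
  term \<open>a(1-b) D\<close>, resp. \<open>(1-a) b D\<close>, with \<open>D = \<phi>(cu,su) + \<phi>(cl,sl) - \<phi>(cu,sl) - \<phi>(cl,su) > 0\<close>.\<close>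

lemma norm_le_bilinear_interpolation:
  fixes xll xul xlu xuu :: "'a::real_normed_vector" and a b :: real
  assumes "0 \<le> a" "a \<le> 1" "0 \<le> b" "b \<le> 1"
  shows "norm (((1-a)*(1-b)) *\<^sub>R xll + (a*(1-b)) *\<^sub>R xul + ((1-a)*b) *\<^sub>R xlu + (a*b) *\<^sub>R xuu)
           \<le> (1-a)*(1-b) * norm xll + a*(1-b) * norm xul + (1-a)*b * norm xlu + a*b * norm xuu"
proof -
  have "norm (((1-a)*(1-b)) *\<^sub>R xll + (a*(1-b)) *\<^sub>R xul + ((1-a)*b) *\<^sub>R xlu + (a*b) *\<^sub>R xuu)
      \<le> norm (((1-a)*(1-b)) *\<^sub>R xll) + norm ((a*(1-b)) *\<^sub>R xul) + norm (((1-a)*b) *\<^sub>R xlu)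
         + norm ((a*b) *\<^sub>R xuu)"
    by (meson norm_triangle_le order_refl add_mono)
  also have "\<dots> = (1-a)*(1-b) * norm xll + a*(1-b) * norm xul + (1-a)*b * norm xlu
                  + a*b * norm xuu"
    using assms by simp
  finally show ?thesis .
qed

lemma normalized_coordinate_in_unit_interval:
  fixes l u x :: real
  assumes "l < u" "x \<in> {l..u}"
  shows "0 \<le> (x - l) / (u - l)" "(x - l) / (u - l) \<le> 1"
  using assms by (simp_all add: field_simps)

lemma phi_le_bilinear_interpolation:
  fixes cl cu sl su c s :: real
  assumes "cl < cu" "sl < su" "c \<in> {cl..cu}" "s \<in> {sl..su}"
  defines "a \<equiv> (c - cl) / (cu - cl)" and "b \<equiv> (s - sl) / (su - sl)"
  shows "phi c s \<le> (1-a)*(1-b) * phi cl sl + a*(1-b) * phi cu sl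
                    + (1-a)*b * phi cl su + a*b * phi cu su"
proof -
  have phi_norm: "phi x y = norm (Complex x y)" for x y
    by (simp add: phi_def cmod_def)
  have ab: "0 \<le> a" "a \<le> 1" "0 \<le> b" "b \<le> 1"
    unfolding a_def b_def using normalized_coordinate_in_unit_interval assms(1-4) by blast+
  have "c = cl + a * (cu - cl)" "s = sl + b * (su - sl)"
    using assms by (auto simp: a_def b_def field_simps)
  then have "Complex c s = ((1-a)*(1-b)) *\<^sub>R Complex cl sl + (a*(1-b)) *\<^sub>R Complex cu sl
                           + ((1-a)*b) *\<^sub>R Complex cl su + (a*b) *\<^sub>R Complex cu su"
    by (intro complex_eqI) (simp_all add: algebra_simps)
  then show ?thesis
    unfolding phi_norm using norm_le_bilinear_interpolation[OF ab] by simp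
qed

lemma affine_shift_eq:
  fixes x k m u v c s :: "'a::comm_ring"
  shows "x - k * u - m * v + k * c + m * s = x + k * (c - u) + m * (s - v)"
  by (simp add: algebra_simps)

lemma diagonal_plane_through_upper_left_corner_eq:
  fixes cl cu sl su c s pll pul plu puu :: real
  assumes "cl < cu" "sl < su"
  defines "a \<equiv> (c - cl) / (cu - cl)" and "b \<equiv> (s - sl) / (su - sl)"
  shows "pll - (puu - plu) / (cu - cl) * cl - (plu - pll) / (su - sl) * sl
           + (puu - plu) / (cu - cl) * c + (plu - pll) / (su - sl) * s
         = (1-a)*(1-b) * pll + a*(1-b) * pul + (1-a)*b * plu + a*b * puu
           + a*(1-b) * (puu + pll - pul - plu)"
proof -
  have "(puu - plu) / (cu - cl) * (c - cl) = a * (puu - plu)"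
       "(plu - pll) / (su - sl) * (s - sl) = b * (plu - pll)"
    by (simp_all add: a_def b_def)
  then have "pll - (puu - plu) / (cu - cl) * cl - (plu - pll) / (su - sl) * sl
           + (puu - plu) / (cu - cl) * c + (plu - pll) / (su - sl) * s
         = pll + a * (puu - plu) + b * (plu - pll)"
    by (simp only: affine_shift_eq)
  also have "\<dots> = (1-a)*(1-b) * pll + a*(1-b) * pul + (1-a)*b * plu + a*b * puu
                   + a*(1-b) * (puu + pll - pul - plu)"
    by (simp add: algebra_simps)
  finally show ?thesis .
qed

lemma diagonal_plane_through_lower_right_corner_eq:
  fixes cl cu sl su c s pll pul plu puu :: real
  assumes "cl < cu" "sl < su"
  defines "a \<equiv> (c - cl) / (cu - cl)" and "b \<equiv> (s - sl) / (su - sl)"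
  shows "puu - (pul - pll) / (cu - cl) * cu - (puu - pul) / (su - sl) * su
           + (pul - pll) / (cu - cl) * c + (puu - pul) / (su - sl) * s
         = (1-a)*(1-b) * pll + a*(1-b) * pul + (1-a)*b * plu + a*b * puu
           + (1-a)*b * (puu + pll - pul - plu)"
proof -
  have "(pul - pll) / (cu - cl) * (c - cu) = (a - 1) * (pul - pll)"
       "(puu - pul) / (su - sl) * (s - su) = (b - 1) * (puu - pul)"
    using assms by (simp_all add: a_def b_def field_simps)
  then have "puu - (pul - pll) / (cu - cl) * cu - (puu - pul) / (su - sl) * su
           + (pul - pll) / (cu - cl) * c + (puu - pul) / (su - sl) * s
         = puu + (a - 1) * (pul - pll) + (b - 1) * (puu - pul)"
    by (simp only: affine_shift_eq)
  also have "\<dots> = (1-a)*(1-b) * pll + a*(1-b) * pul + (1-a)*b * plu + a*b * puu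
                   + (1-a)*b * (puu + pll - pul - plu)"
    by (simp add: algebra_simps)
  finally show ?thesis .
qed

theorem proposition5:
  fixes cl cu sl su :: real
  assumes "cl < cu" and "sl < su"
    and "phi cu su + phi cl sl - phi cu sl - phi cl su > 0"
  defines "\<eta>3 \<equiv> (phi cu su - phi cl su) / (cu - cl)"
    and "\<delta>3 \<equiv> (phi cl su - phi cl sl) / (su - sl)"
    and "\<nu>3 \<equiv> phi cl sl - (phi cu su - phi cl su) / (cu - cl) * cl - (phi cl su - phi cl sl) / (su - sl) * sl"
    and "\<eta>4 \<equiv> (phi cu sl - phi cl sl) / (cu - cl)"
    and "\<delta>4 \<equiv> (phi cu su - phi cu sl) / (su - sl)"
    and "\<nu>4 \<equiv> phi cu su - (phi cu sl - phi cl sl) / (cu - cl) * cu - (phi cu su - phi cu sl) / (su - sl) * su"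
  shows "\<forall>c\<in>{cl..cu}. \<forall>s\<in>{sl..su}.
           \<nu>3 + \<eta>3 * c + \<delta>3 * s \<ge> sqrt (c\<^sup>2 + s\<^sup>2) \<and>
           \<nu>4 + \<eta>4 * c + \<delta>4 * s \<ge> sqrt (c\<^sup>2 + s\<^sup>2)"
proof (intro ballI)
  fix c s assume cs: "c \<in> {cl..cu}" "s \<in> {sl..su}"
  define a where "a = (c - cl) / (cu - cl)"
  define b where "b = (s - sl) / (su - sl)"
  have "0 \<le> a" "a \<le> 1" "0 \<le> b" "b \<le> 1"
    unfolding a_def b_def using normalized_coordinate_in_unit_interval assms(1,2) cs by blast+
  then have "0 \<le> a * (1-b)" "0 \<le> (1-a) * b"
    by simp_all
  with assms(3) have gaps: "0 \<le> a*(1-b) * (phi cu su + phi cl sl - phi cu sl - phi cl su)"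
    "0 \<le> (1-a)*b * (phi cu su + phi cl sl - phi cu sl - phi cl su)"
    by simp_all
  note plane3 = diagonal_plane_through_upper_left_corner_eq[OF assms(1,2),
      where c = c and s = s and pll = "phi cl sl" and pul = "phi cu sl"
      and plu = "phi cl su" and puu = "phi cu su", folded a_def b_def]
  note plane4 = diagonal_plane_through_lower_right_corner_eq[OF assms(1,2),
      where c = c and s = s and pll = "phi cl sl" and pul = "phi cu sl"
      and plu = "phi cl su" and puu = "phi cu su", folded a_def b_def]
  show "\<nu>3 + \<eta>3 * c + \<delta>3 * s \<ge> sqrt (c\<^sup>2 + s\<^sup>2) \<and>
        \<nu>4 + \<eta>4 * c + \<delta>4 * s \<ge> sqrt (c\<^sup>2 + s\<^sup>2)"
    using phi_le_bilinear_interpolation[OF assms(1,2) cs, folded a_def b_def] gaps plane3 plane4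
    unfolding \<nu>3_def \<eta>3_def \<delta>3_def \<nu>4_def \<eta>4_def \<delta>4_def phi_def[of c s]
    by linarith
qed

end
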